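(* Suppose Assumptions A and B hold. Suppose moreover that for every $(\hat x,\hat t)\in\mathcal D_{\mathrm{SDP}}$ with $\mathcal F(\hat x)$ semidefinite, $(\hat x,\hat t)$ can be written as a convex combination of finitely many points $(x_\alpha,t_\alpha)\in\mathcal D_{\mathrm{SDP}}$ with $\operatorname{affdim}(\mathcal F(x_\alpha))>\operatorname{affdim}(\mathcal F(\hat x))$ for each $\alpha$. Then $\operatorname{conv}(\mathcal D)=\mathcal D_{\mathrm{SDP}}$ and $\mathrm{Opt}=\mathrm{Opt}_{\mathrm{SDP}}$.
   Context: Fix integers $N\ge 1$, $m_I,m_E\ge 0$, $m:=m_I+m_E\ge 1$; $[a,b]=\{a,\dots,b\}$, $[n]=[1,n]$. For $i\in[0,m]$ let $q_i(x)=x^\top A_ix+2b_i^\top x+c_i$ with $A_i\in\mathbb S^N$, $b_i\in\mathbb R^N$, $c_i\in\mathbb R$. $\mathrm{Opt}:=\inf\{q_0(x): q_i(x)\le 0\ \forall i\in[m_I],\ q_i(x)=0\ \forall i\in[m_I+1,m]\}$ and $\mathcal D:=\{(x,t)\in\mathbb R^N\times\mathbb R: q_0(x)\le 2t,\ q_i(x)\le0\ \forall i\in[m_I],\ q_i(x)=0\ \forall i\in[m_I+1,m]\}$. Let $Q_i=\begin{pmatrix}c_i& b_i^\top\\ b_i& A_i\end{pmatrix}$; $\mathrm{Opt}_{\mathrm{SDP}}:=\inf\{\langle Q_0,Y\rangle: Y=\begin{pmatrix}1&x^\top\\ x& X\end{pmatrix}\succeq 0,\ X\in\mathbb S^N,\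 \langle Q_i,Y\rangle\le 0\ \forall i\in[m_I],\ \langle Q_i,Y\rangle=0\ \forall i\in[m_I+1,m]\}$ and $\mathcal D_{\mathrm{SDP}}:=\{(x,t):\exists X\in\mathbb S^N$ with $Y=\begin{pmatrix}1&x^\top\\ x& X\end{pmatrix}\succeq0$, $\langle Q_0,Y\rangle\le 2t$, and the same constraints$\}$. For $\gamma\in\mathbb R^m$, $A(\gamma)=A_0+\sum\gamma_iA_i$, $q(\gamma,x)=q_0(x)+\sum\gamma_iq_i(x)$, $\Gamma:=\{\gamma: A(\gamma)\succeq0,\ \gamma_i\ge0\ \forall i\in[m_I]\}$. Assumption A: the QCQP is feasible and some $\gamma^*$ with $\gamma^*_i\ge0$ ($i\in[m_I]$) has $A(\gamma^* )\succ0$. Assumption B: for every $\hat x$, if $\sup_{\gamma\in\Gamma}q(\gamma,\hat x)$ is finite it is attained. Then $\mathcal F(\hat x):=\arg\max_{\gamma\in\Gamma}q(\gamma,\hat x)$, a nonempty face of $\Gamma$, defined whenever the supremum is finite (in particular for $(\hat x,\hat t)\in\mathcal D_{\mathrm{SDP}}$). A nonempty face is definite if it contains $\gamma$ with $A(\gamma)\succ0$, semidefinite otherwise. $\operatorname{affdim}$ denotes the dimension of the affine hull. *)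

theory Defs
  imports "HOL-Analysis.Analysis"
begin

text \<open>The space R^N is real^'n ('n finite, N = CARD('n)).
 The constraint index set [m] is the finite type 'm (m = CARD('m) >= 1);
 the inequality constraints are those indexed by a set Ineq (corresponding to [m_I]),
 the others are equalities (corresponding to [m_I+1,m]).
 The (N+1)x(N+1) matrices are indexed by 'n option, with None playing the role of index 0.\<close>

definition sym_mat :: "real^'k^'k \<Rightarrow> bool" where
  "sym_mat M \<longleftrightarrow> transpose M = M"

definition psd :: "real^'k^'k \<Rightarrow> bool" where
  "psd M \<longleftrightarrow> sym_mat M \<and> (\<forall>v. 0 \<le> v \<bullet> (M *v v))"

definition pd :: "real^'k^'k \<Rightarrow> bool" where
  "pd M \<longleftrightarrow> sym_mat M \<and> (\<forall>v. v \<noteq> 0 \<longrightarrow> 0 < v \<bullet> (M *v v))"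

definition qf :: "real^'n^'n \<Rightarrow> real^'n \<Rightarrow> real \<Rightarrow> real^'n \<Rightarrow> real" where
  "qf A b c x = x \<bullet> (A *v x) + 2 * (b \<bullet> x) + c"

definition frob :: "real^'k^'k \<Rightarrow> real^'k^'k \<Rightarrow> real" where
  "frob P Y = (\<Sum>i\<in>UNIV. \<Sum>j\<in>UNIV. P$i$j * Y$i$j)"

text \<open>Q = [[c, b^T],[b, A]] and Y = [[1, x^T],[x, X]].\<close>
definition Qmat :: "real^'n^'n \<Rightarrow> real^'n \<Rightarrow> real \<Rightarrow> real^('n option)^('n option)" where
  "Qmat A b c = (\<chi> i j. case (i, j) of (None, None) \<Rightarrow> c
      | (None, Some l) \<Rightarrow> b$l | (Some k, None) \<Rightarrow> b$k | (Some k, Some l) \<Rightarrow> A$k$l)"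

definition Ymat :: "real^'n \<Rightarrow> real^'n^'n \<Rightarrow> real^('n option)^('n option)" where
  "Ymat x X = (\<chi> i j. case (i, j) of (None, None) \<Rightarrow> 1
      | (None, Some l) \<Rightarrow> x$l | (Some k, None) \<Rightarrow> x$k | (Some k, Some l) \<Rightarrow> X$k$l)"

definition feasQ :: "'m set \<Rightarrow> ('m \<Rightarrow> real^'n^'n) \<Rightarrow> ('m \<Rightarrow> real^'n) \<Rightarrow> ('m \<Rightarrow> real)
    \<Rightarrow> real^'n \<Rightarrow> bool" where
  "feasQ Ineq A b c x \<longleftrightarrow> (\<forall>i\<in>Ineq. qf (A i) (b i) (c i) x \<le> 0)
      \<and> (\<forall>i. i \<notin> Ineq \<longrightarrow> qf (A i) (b i) (c i) x = 0)"

definition feasSDP :: "'m set \<Rightarrow> ('m \<Rightarrow> real^'n^'n) \<Rightarrow> ('m \<Rightarrow> real^'n) \<Rightarrow> ('m \<Rightarrow> real)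
    \<Rightarrow> real^'n \<Rightarrow> real^'n^'n \<Rightarrow> bool" where
  "feasSDP Ineq A b c x X \<longleftrightarrow> sym_mat X \<and> psd (Ymat x X)
      \<and> (\<forall>i\<in>Ineq. frob (Qmat (A i) (b i) (c i)) (Ymat x X) \<le> 0)
      \<and> (\<forall>i. i \<notin> Ineq \<longrightarrow> frob (Qmat (A i) (b i) (c i)) (Ymat x X) = 0)"

definition Opt :: "real^'n^'n \<Rightarrow> real^'n \<Rightarrow> real \<Rightarrow> 'm set \<Rightarrow> ('m \<Rightarrow> real^'n^'n)
    \<Rightarrow> ('m \<Rightarrow> real^'n) \<Rightarrow> ('m \<Rightarrow> real) \<Rightarrow> ereal" where
  "Opt A0 b0 c0 Ineq A b c = (INF x\<in>{x. feasQ Ineq A b c x}. ereal (qf A0 b0 c0 x))"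

definition OptSDP :: "real^'n^'n \<Rightarrow> real^'n \<Rightarrow> real \<Rightarrow> 'm set \<Rightarrow> ('m \<Rightarrow> real^'n^'n)
    \<Rightarrow> ('m \<Rightarrow> real^'n) \<Rightarrow> ('m \<Rightarrow> real) \<Rightarrow> ereal" where
  "OptSDP A0 b0 c0 Ineq A b c =
     (INF xX\<in>{(x, X). feasSDP Ineq A b c x X}.
        ereal (frob (Qmat A0 b0 c0) (Ymat (fst xX) (snd xX))))"

definition Dset :: "real^'n^'n \<Rightarrow> real^'n \<Rightarrow> real \<Rightarrow> 'm set \<Rightarrow> ('m \<Rightarrow> real^'n^'n)
    \<Rightarrow> ('m \<Rightarrow> real^'n) \<Rightarrow> ('m \<Rightarrow> real) \<Rightarrow> ((real^'n) \<times> real) set" where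
  "Dset A0 b0 c0 Ineq A b c = {(x, t). qf A0 b0 c0 x \<le> 2 * t \<and> feasQ Ineq A b c x}"

definition DSDP :: "real^'n^'n \<Rightarrow> real^'n \<Rightarrow> real \<Rightarrow> 'm set \<Rightarrow> ('m \<Rightarrow> real^'n^'n)
    \<Rightarrow> ('m \<Rightarrow> real^'n) \<Rightarrow> ('m \<Rightarrow> real) \<Rightarrow> ((real^'n) \<times> real) set" where
  "DSDP A0 b0 c0 Ineq A b c = {(x, t). \<exists>X. feasSDP Ineq A b c x X
       \<and> frob (Qmat A0 b0 c0) (Ymat x X) \<le> 2 * t}"

definition Agam :: "real^'n^'n \<Rightarrow> ('m::finite \<Rightarrow> real^'n^'n) \<Rightarrow> real^'m \<Rightarrow> real^'n^'n" where
  "Agam A0 A g = A0 + (\<Sum>i\<in>UNIV. g$i *\<^sub>R A i)"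

definition qgam :: "real^'n^'n \<Rightarrow> real^'n \<Rightarrow> real \<Rightarrow> ('m::finite \<Rightarrow> real^'n^'n)
    \<Rightarrow> ('m \<Rightarrow> real^'n) \<Rightarrow> ('m \<Rightarrow> real) \<Rightarrow> real^'m \<Rightarrow> real^'n \<Rightarrow> real" where
  "qgam A0 b0 c0 A b c g x = qf A0 b0 c0 x + (\<Sum>i\<in>UNIV. g$i * qf (A i) (b i) (c i) x)"

definition Gamma :: "real^'n^'n \<Rightarrow> 'm::finite set \<Rightarrow> ('m \<Rightarrow> real^'n^'n) \<Rightarrow> (real^'m) set" where
  "Gamma A0 Ineq A = {g. psd (Agam A0 A g) \<and> (\<forall>i\<in>Ineq. 0 \<le> g$i)}"

text \<open>\<F>(x) = argmax over \<Gamma> of q(\<cdot>,x) (meaningful when the supremum is finite).\<close>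
definition Fface :: "real^'n^'n \<Rightarrow> real^'n \<Rightarrow> real \<Rightarrow> 'm::finite set \<Rightarrow> ('m \<Rightarrow> real^'n^'n)
    \<Rightarrow> ('m \<Rightarrow> real^'n) \<Rightarrow> ('m \<Rightarrow> real) \<Rightarrow> real^'n \<Rightarrow> (real^'m) set" where
  "Fface A0 b0 c0 Ineq A b c x = {g \<in> Gamma A0 Ineq A.
      \<forall>g'\<in>Gamma A0 Ineq A. qgam A0 b0 c0 A b c g' x \<le> qgam A0 b0 c0 A b c g x}"

definition semidefinite_face :: "real^'n^'n \<Rightarrow> ('m::finite \<Rightarrow> real^'n^'n) \<Rightarrow> (real^'m) set \<Rightarrow> bool" where
  "semidefinite_face A0 A F \<longleftrightarrow> F \<noteq> {} \<and> \<not> (\<exists>g\<in>F. pd (Agam A0 A g))"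

end

theory Submission
  imports Defs
begin

text \<open>Weak duality: for \<open>(x,t) \<in> D\<^sub>S\<^sub>D\<^sub>P\<close> with witness \<open>X\<close> and \<open>\<gamma> \<in> \<Gamma>\<close>,
  \<open>\<langle>Q\<^sub>0,Y\<rangle> + \<Sigma> \<gamma>\<^sub>i \<langle>Q\<^sub>i,Y\<rangle> = q(\<gamma>,x) + \<langle>A(\<gamma>), X - x x\<^sup>T\<rangle>\<close>, and the Frobenius product of two
  positive semidefinite matrices is nonnegative, so \<open>q(\<gamma>,x) \<le> 2t\<close>. Hence the supremum is finite and, by
  Assumption B, attained on the face \<open>\<F>(x)\<close>. If \<open>\<F>(x)\<close> contains \<open>\<gamma>\<close> with \<open>A(\<gamma>) \<succ> 0\<close>, every small
  move of a single coordinate of \<open>\<gamma>\<close> stays in \<open>\<Gamma>\<close>, so maximality forces \<open>x\<close> to be feasible with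
  complementary slackness; then \<open>q\<^sub>0(x) = q(\<gamma>,x) \<le> 2t\<close> and \<open>(x,t) \<in> D\<close>. Otherwise the hypothesis splits
  \<open>(x,t)\<close> into points whose faces have larger affine dimension, and induction on the codimension
  of \<open>\<F>(x)\<close> gives \<open>D\<^sub>S\<^sub>D\<^sub>P \<subseteq> conv D\<close>. Conversely \<open>D\<^sub>S\<^sub>D\<^sub>P\<close> is convex and contains \<open>D\<close> via \<open>X = x x\<^sup>T\<close>.
  Since the objective is the \<open>t\<close>-coordinate, a convex combination of points of \<open>D\<close> is dominated by
  one of them, whence \<open>Opt = Opt\<^sub>S\<^sub>D\<^sub>P\<close>.\<close>

lemma inner_matrix_vector_expand:
  "(u::real^'k) \<bullet> (M *v v) = (\<Sum>i\<in>UNIV. \<Sum>j\<in>UNIV. u$i * M$i$j * v$j)"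
  by (simp add: inner_vec_def matrix_vector_mult_def sum_distrib_left mult.assoc)

lemma sym_mat_entry: "sym_mat M \<Longrightarrow> M$i$j = M$j$i"
  unfolding sym_mat_def by (metis transpose_def vec_lambda_beta)

lemma inner_matrix_vector_commute:
  assumes "sym_mat (M::real^'k^'k)"
  shows "(u::real^'k) \<bullet> (M *v v) = v \<bullet> (M *v u)"
  unfolding inner_matrix_vector_expand
  by (subst sum.swap) (simp add: sym_mat_entry[OF assms] mult.commute mult.left_commute)

lemma quad_form_add_scaleR:
  assumes "sym_mat (M::real^'k^'k)"
  shows "(u + t *\<^sub>R v) \<bullet> (M *v (u + t *\<^sub>R v))
    = u \<bullet> (M *v u) + 2 * t * (u \<bullet> (M *v v)) + t\<^sup>2 * (v \<bullet> (M *v v))"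
  using inner_matrix_vector_commute[OF assms, of v u]
  by (simp add: matrix_vector_right_distrib matrix_vector_mult_scaleR inner_add_left
      inner_add_right power2_eq_square algebra_simps)

lemma inner_axis_matrix_axis: "axis k 1 \<bullet> ((M::real^'k^'k) *v axis j 1) = M$k$j"
  by (simp add: matrix_vector_mult_basis inner_axis' column_def)

lemma quadratic_nonneg_imp_discriminant_le:
  fixes a b c :: real
  assumes "0 \<le> c" and "\<And>t. 0 \<le> a + 2 * t * b + t\<^sup>2 * c"
  shows "b\<^sup>2 \<le> a * c"
proof (cases "c = 0")
  case True
  have "b = 0"
  proof (rule ccontr)
    assume "b \<noteq> 0"
    with assms(2)[of "- (a + 1) / (2 * b)"] True show False by (simp add: field_simps)
  qed
  with True show ?thesis by simp
next
  case False
  with assms have "0 < c" by simp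
  with assms(2)[of "- b / c"] show ?thesis by (simp add: field_simps power2_eq_square)
qed

lemma psd_cauchy_schwarz:
  assumes "psd (Z::real^'k^'k)"
  shows "(u \<bullet> (Z *v v))\<^sup>2 \<le> (u \<bullet> (Z *v u)) * (v \<bullet> (Z *v v))"
proof (rule quadratic_nonneg_imp_discriminant_le)
  show "0 \<le> v \<bullet> (Z *v v)" using assms unfolding psd_def by simp
  show "0 \<le> u \<bullet> (Z *v u) + 2 * t * (u \<bullet> (Z *v v)) + t\<^sup>2 * (v \<bullet> (Z *v v))" for t
    using assms quad_form_add_scaleR[of Z u t v] unfolding psd_def by metis
qed

lemma psd_diag_nonneg: "psd (Z::real^'k^'k) \<Longrightarrow> 0 \<le> Z$j$j"
  using inner_axis_matrix_axis[of j Z j] unfolding psd_def by metis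

lemma psd_entry_eq_0:
  assumes "psd (Z::real^'k^'k)" "Z$k$k = 0"
  shows "Z$k$j = 0"
  using psd_cauchy_schwarz[OF assms(1), of "axis k 1" "axis j 1"] assms(2)
  by (simp add: inner_axis_matrix_axis)

definition outer :: "real^'k \<Rightarrow> real^'k^'k" where
  "outer w = (\<chi> i j. w$i * w$j)"

lemma sym_mat_outer: "sym_mat (outer w)"
  by (simp add: sym_mat_def transpose_def outer_def vec_eq_iff mult.commute)

lemma quad_form_outer: "v \<bullet> (outer w *v v) = (w \<bullet> v)\<^sup>2"
  unfolding inner_matrix_vector_expand
  by (simp add: outer_def inner_vec_def power2_eq_square sum_product algebra_simps)

lemma psd_outer: "psd (outer w)"
  by (simp add: psd_def sym_mat_outer quad_form_outer)

lemma frob_outer: "frob G (outer w) = w \<bullet> (G *v w)"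
  by (simp add: frob_def outer_def inner_matrix_vector_expand algebra_simps)

lemma frob_diff_right: "frob G (P - Q) = frob G P - frob G Q"
  by (simp add: frob_def algebra_simps sum_subtractf)

text \<open>One step of Cholesky elimination on column \<open>j\<close>.\<close>

lemma psd_diff_outer_column:
  assumes psd: "psd (Z::real^'k^'k)" and pos: "0 < Z$j$j"
  defines "w \<equiv> (\<chi> i. Z$i$j / sqrt (Z$j$j))"
  shows "psd (Z - outer w)" and "(Z - outer w)$j$j = 0"
    and "\<And>k. Z$k$k = 0 \<Longrightarrow> (Z - outer w)$k$k = 0"
proof -
  have sym: "sym_mat Z" using psd by (simp add: psd_def)
  have outer_entry: "outer w $ i $ l = Z$i$j * Z$l$j / Z$j$j" for i l
    using pos by (simp add: outer_def w_def field_simps)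
  have "v \<bullet> ((Z - outer w) *v v) \<ge> 0" for v
  proof -
    have "w \<bullet> v = (v \<bullet> (Z *v axis j 1)) / sqrt (Z$j$j)"
      by (simp add: w_def inner_vec_def matrix_vector_mult_basis column_def sum_divide_distrib
          mult.commute)
    then have "(w \<bullet> v)\<^sup>2 * Z$j$j = (v \<bullet> (Z *v axis j 1))\<^sup>2"
      using pos by (simp add: power_divide)
    also have "\<dots> \<le> (v \<bullet> (Z *v v)) * Z$j$j"
      using psd_cauchy_schwarz[OF psd, of v "axis j 1"] by (simp add: inner_axis_matrix_axis)
    finally show ?thesis
      using pos by (simp add: matrix_vector_mult_diff_rdistrib inner_diff_right quad_form_outer)
  qed
  moreover have "sym_mat (Z - outer w)"
    using sym sym_mat_outer by (simp add: sym_mat_def transpose_def vec_eq_iff)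
  ultimately show "psd (Z - outer w)" by (simp add: psd_def)
  show "(Z - outer w)$j$j = 0" using pos by (simp add: outer_entry power2_eq_square)
  show "(Z - outer w)$k$k = 0" if "Z$k$k = 0" for k
    using psd_entry_eq_0[OF psd that] that by (simp add: outer_entry)
qed

lemma psd_frob_nonneg:
  fixes G Z :: "real^'k^'k"
  assumes "psd G" and "psd Z"
  shows "0 \<le> frob G Z"
  using assms(2)
proof (induction "card {k. Z$k$k \<noteq> 0}" arbitrary: Z rule: less_induct)
  case less
  show ?case
  proof (cases "\<exists>j. Z$j$j \<noteq> 0")
    case False
    then show ?thesis using psd_entry_eq_0[OF less.prems] by (simp add: frob_def)
  next
    case True
    then obtain j where "Z$j$j \<noteq> 0" by blast
    with psd_diag_nonneg[OF less.prems] have pos: "0 < Z$j$j" by (simp add: order_less_le)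
    define w where "w = (\<chi> i. Z$i$j / sqrt (Z$j$j))"
    note step = psd_diff_outer_column[OF less.prems pos, folded w_def]
    have "{k. (Z - outer w)$k$k \<noteq> 0} \<subset> {k. Z$k$k \<noteq> 0}"
      using step(2,3) pos by fastforce
    then have "0 \<le> frob G (Z - outer w)"
      by (intro less.hyps psubset_card_mono step(1)) simp_all
    moreover have "0 \<le> frob G (outer w)"
      using assms(1) by (simp add: frob_outer psd_def)
    ultimately show ?thesis by (simp add: frob_diff_right)
  qed
qed

lemma sum_UNIV_option:
  "(\<Sum>i\<in>(UNIV::'a::finite option set). f i) = f None + (\<Sum>k\<in>UNIV. f (Some k))"
  by (simp add: UNIV_option_conv sum.reindex)

lemma frob_Qmat_Ymat: "frob (Qmat A b c) (Ymat x X) = qf A b c x + frob A (X - outer x)"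
  unfolding frob_def sum_UNIV_option qf_def
  by (simp add: Qmat_def Ymat_def outer_def inner_vec_def matrix_vector_mult_def
      algebra_simps sum.distrib sum_subtractf sum_distrib_left)

text \<open>\<open>X - outer x\<close> is the Schur complement of the corner entry \<open>1\<close> of \<open>Ymat x X\<close>.\<close>

lemma psd_Ymat_imp_psd_Schur:
  assumes "psd (Ymat x X)"
  shows "psd (X - outer x)"
  unfolding psd_def
proof (intro conjI allI)
  have "sym_mat (Ymat x X)" using assms by (simp add: psd_def)
  then have "X$k$l = X$l$k" for k l
    using sym_mat_entry[of "Ymat x X" "Some k" "Some l"] by (simp add: Ymat_def)
  then show "sym_mat (X - outer x)"
    by (simp add: sym_mat_def transpose_def outer_def vec_eq_iff mult.commute)
  fix v :: "real^'a"
  define u :: "real^('a option)" where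
    "u = (\<chi> i. case i of None \<Rightarrow> - (x \<bullet> v) | Some k \<Rightarrow> v$k)"
  have "0 \<le> u \<bullet> (Ymat x X *v u)" using assms by (simp add: psd_def)
  also have "\<dots> = v \<bullet> ((X - outer x) *v v)"
    unfolding inner_matrix_vector_expand sum_UNIV_option
    by (simp add: u_def Ymat_def outer_def inner_vec_def algebra_simps sum.distrib sum_subtractf
        sum_distrib_left sum_product power2_eq_square sum_negf)
  finally show "0 \<le> v \<bullet> ((X - outer x) *v v)" .
qed

lemma Ymat_outer: "Ymat x (outer x) = outer (\<chi> i. case i of None \<Rightarrow> 1 | Some k \<Rightarrow> x$k)"
  by (simp add: Ymat_def outer_def vec_eq_iff split: option.split)

lemma frob_Qmat_Ymat_outer: "frob (Qmat A b c) (Ymat x (outer x)) = qf A b c x"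
  unfolding frob_Qmat_Ymat by (simp add: frob_def)

lemma feasQ_imp_feasSDP_outer: "feasQ Ineq A b c x \<Longrightarrow> feasSDP Ineq A b c x (outer x)"
  using psd_outer[of "\<chi> i. case i of None \<Rightarrow> 1 | Some k \<Rightarrow> x$k"]
  unfolding feasQ_def feasSDP_def frob_Qmat_Ymat_outer Ymat_outer[symmetric]
  by (simp add: sym_mat_outer)

lemma Dset_subset_DSDP: "Dset A0 b0 c0 Ineq A b c \<subseteq> DSDP A0 b0 c0 Ineq A b c"
proof
  fix p assume "p \<in> Dset A0 b0 c0 Ineq A b c"
  then show "p \<in> DSDP A0 b0 c0 Ineq A b c"
    unfolding Dset_def DSDP_def
    by (auto simp: feasQ_imp_feasSDP_outer frob_Qmat_Ymat_outer intro!: exI[of _ "outer (fst p)"])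
qed

lemma psd_convex_comb:
  "psd P \<Longrightarrow> psd Q \<Longrightarrow> 0 \<le> u \<Longrightarrow> 0 \<le> v \<Longrightarrow> psd (u *\<^sub>R P + v *\<^sub>R (Q::real^'k^'k))"
  unfolding psd_def sym_mat_def
  by (simp add: transpose_def vec_eq_iff matrix_vector_mult_add_rdistrib
      scaleR_matrix_vector_assoc[symmetric] inner_add_right)

lemma frob_convex_comb: "frob P (u *\<^sub>R Y1 + v *\<^sub>R Y2) = u * frob P Y1 + v * frob P Y2"
  by (simp add: frob_def sum.distrib sum_distrib_left algebra_simps)

lemma Ymat_convex_comb:
  "u + v = 1 \<Longrightarrow> Ymat (u *\<^sub>R x1 + v *\<^sub>R x2) (u *\<^sub>R X1 + v *\<^sub>R X2)
    = u *\<^sub>R Ymat x1 X1 + v *\<^sub>R Ymat x2 X2"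
  by (simp add: Ymat_def vec_eq_iff split: option.split)

lemma feasSDP_convex_comb:
  assumes "feasSDP Ineq A b c x1 X1" "feasSDP Ineq A b c x2 X2"
    and "0 \<le> u" "0 \<le> v" "u + v = 1"
  shows "feasSDP Ineq A b c (u *\<^sub>R x1 + v *\<^sub>R x2) (u *\<^sub>R X1 + v *\<^sub>R X2)"
  using assms unfolding feasSDP_def Ymat_convex_comb[OF assms(5)] frob_convex_comb
  by (auto simp: sym_mat_def transpose_def vec_eq_iff psd_convex_comb
      intro!: add_nonpos_nonpos mult_nonneg_nonpos)

lemma convex_DSDP: "convex (DSDP A0 b0 c0 Ineq A b c)"
proof (rule convexI)
  fix p q :: "(real^'a) \<times> real" and u v :: real
  assume "p \<in> DSDP A0 b0 c0 Ineq A b c" "q \<in> DSDP A0 b0 c0 Ineq A b c"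
    and uv: "0 \<le> u" "0 \<le> v" "u + v = 1"
  moreover obtain x1 t1 x2 t2 where pq: "p = (x1, t1)" "q = (x2, t2)" by fastforce
  ultimately obtain X1 X2 where
    p: "feasSDP Ineq A b c x1 X1" "frob (Qmat A0 b0 c0) (Ymat x1 X1) \<le> 2 * t1" and
    q: "feasSDP Ineq A b c x2 X2" "frob (Qmat A0 b0 c0) (Ymat x2 X2) \<le> 2 * t2"
    unfolding DSDP_def by blast
  have "frob (Qmat A0 b0 c0) (Ymat (u *\<^sub>R x1 + v *\<^sub>R x2) (u *\<^sub>R X1 + v *\<^sub>R X2))
      = u * frob (Qmat A0 b0 c0) (Ymat x1 X1) + v * frob (Qmat A0 b0 c0) (Ymat x2 X2)"
    by (simp only: Ymat_convex_comb[OF uv(3)] frob_convex_comb)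
  also have "\<dots> \<le> 2 * (u * t1 + v * t2)"
    using mult_left_mono[OF p(2) uv(1)] mult_left_mono[OF q(2) uv(2)] by simp
  finally have "(u *\<^sub>R x1 + v *\<^sub>R x2, u * t1 + v * t2) \<in> DSDP A0 b0 c0 Ineq A b c"
    using feasSDP_convex_comb[OF p(1) q(1) uv] unfolding DSDP_def by blast
  then show "u *\<^sub>R p + v *\<^sub>R q \<in> DSDP A0 b0 c0 Ineq A b c"
    by (simp add: pq)
qed

lemma frob_Agam:
  "frob (Agam A0 A (g::real^'m::finite)) Z = frob A0 Z + (\<Sum>i\<in>UNIV. g$i * frob (A i) Z)"
proof -
  have "frob (Agam A0 A g) Z
      = frob A0 Z + (\<Sum>k\<in>UNIV. \<Sum>l\<in>UNIV. \<Sum>i\<in>UNIV. g$i * (A i$k$l * Z$k$l))"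
    unfolding frob_def Agam_def
    by (simp add: sum_component algebra_simps sum.distrib sum_distrib_left sum_distrib_right)
  also have "(\<Sum>k\<in>UNIV. \<Sum>l\<in>UNIV. \<Sum>i\<in>UNIV. g$i * (A i$k$l * Z$k$l))
      = (\<Sum>i\<in>UNIV. g$i * frob (A i) Z)"
    unfolding frob_def sum_distrib_left
    by (subst sum.swap, rule sum.cong[OF refl], rule sum.swap)
  finally show ?thesis .
qed

lemma qgam_le_frob_Qmat:
  assumes feas: "feasSDP Ineq A b c x X" and g: "g \<in> Gamma A0 Ineq A"
  shows "qgam A0 b0 c0 A b c g x \<le> frob (Qmat A0 b0 c0) (Ymat x X)"
proof -
  have "0 \<le> frob (Agam A0 A g) (X - outer x)"
    using g feas by (intro psd_frob_nonneg psd_Ymat_imp_psd_Schur) (simp_all add: Gamma_def feasSDP_def)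
  moreover have "(\<Sum>i\<in>UNIV. g$i * frob (Qmat (A i) (b i) (c i)) (Ymat x X)) \<le> 0"
  proof (rule sum_nonpos)
    fix i
    show "g$i * frob (Qmat (A i) (b i) (c i)) (Ymat x X) \<le> 0"
    proof (cases "i \<in> Ineq")
      case True
      with g feas show ?thesis by (simp add: Gamma_def feasSDP_def mult_nonneg_nonpos)
    next
      case False
      with feas show ?thesis by (simp add: feasSDP_def)
    qed
  qed
  moreover have "qgam A0 b0 c0 A b c g x + frob (Agam A0 A g) (X - outer x)
      = frob (Qmat A0 b0 c0) (Ymat x X) + (\<Sum>i\<in>UNIV. g$i * frob (Qmat (A i) (b i) (c i)) (Ymat x X))"
    unfolding frob_Agam frob_Qmat_Ymat qgam_def by (simp add: algebra_simps sum.distrib)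
  ultimately show ?thesis by linarith
qed

lemma qgam_le_of_DSDP:
  "(x, t) \<in> DSDP A0 b0 c0 Ineq A b c \<Longrightarrow> g \<in> Gamma A0 Ineq A \<Longrightarrow> qgam A0 b0 c0 A b c g x \<le> 2 * t"
  unfolding DSDP_def using qgam_le_frob_Qmat by (fastforce intro: order_trans)

lemma quad_form_scaleR: "(s *\<^sub>R u) \<bullet> ((M::real^'k^'k) *v (s *\<^sub>R u)) = s\<^sup>2 * (u \<bullet> (M *v u))"
  by (simp add: matrix_vector_mult_scaleR power2_eq_square)

lemma pd_quad_form_lower_bound:
  assumes "pd (M::real^'k^'k)"
  obtains lam where "0 < lam" "\<And>v. lam * (norm v)\<^sup>2 \<le> v \<bullet> (M *v v)"
proof -
  have cont: "continuous_on (sphere 0 1) (\<lambda>v::real^'k. v \<bullet> (M *v v))"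
    using matrix_vector_mul_bounded_linear[of M]
    by (intro continuous_intros linear_continuous_on) 
  have "sphere (0::real^'k) 1 \<noteq> {}"
    using vector_choose_size[of 1] by (auto simp: sphere_def)
  then obtain u where u: "u \<in> sphere 0 1" and min: "\<And>w. w \<in> sphere 0 1 \<Longrightarrow> u \<bullet> (M *v u) \<le> w \<bullet> (M *v w)"
    using continuous_attains_inf[OF compact_sphere _ cont] by blast
  have "u \<noteq> 0" using u by auto
  with assms have pos: "0 < u \<bullet> (M *v u)" by (simp add: pd_def)
  have "u \<bullet> (M *v u) * (norm v)\<^sup>2 \<le> v \<bullet> (M *v v)" for v
  proof (cases "v = 0")
    case False
    then have "(norm v)\<^sup>2 * (u \<bullet> (M *v u)) \<le> (norm v)\<^sup>2 * ((v /\<^sub>R norm v) \<bullet> (M *v (v /\<^sub>R norm v)))"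
      by (intro mult_left_mono min) auto
    also have "\<dots> = v \<bullet> (M *v v)"
      using False by (simp only: quad_form_scaleR) (simp add: power_inverse field_simps)
    finally show ?thesis by (simp add: mult.commute)
  qed simp
  with pos that show ?thesis by blast
qed

lemma quad_form_upper_bound:
  obtains K where "0 < K" "\<And>v. \<bar>v \<bullet> ((N::real^'k^'k) *v v)\<bar> \<le> K * (norm v)\<^sup>2"
proof -
  obtain K where "0 < K" and K: "\<And>v. norm (N *v v) \<le> norm v * K"
    using bounded_linear.pos_bounded[OF matrix_vector_mul_bounded_linear] by blast
  have "\<bar>v \<bullet> (N *v v)\<bar> \<le> K * (norm v)\<^sup>2" for v
    using Cauchy_Schwarz_ineq2[of v "N *v v"] mult_left_mono[OF K[of v] norm_ge_zero[of v]]
    by (simp add: power2_eq_square algebra_simps)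
  with \<open>0 < K\<close> that show ?thesis by blast
qed

lemma pd_imp_psd_perturbation:
  assumes "pd (M::real^'k^'k)" "sym_mat N"
  obtains e where "0 < e" "\<And>s. \<bar>s\<bar> < e \<Longrightarrow> psd (M + s *\<^sub>R N)"
proof -
  obtain lam where lam: "0 < lam" "\<And>v. lam * (norm v)\<^sup>2 \<le> v \<bullet> (M *v v)"
    using pd_quad_form_lower_bound[OF assms(1)] by blast
  obtain K where K: "0 < K" "\<And>v. \<bar>v \<bullet> (N *v v)\<bar> \<le> K * (norm v)\<^sup>2"
    using quad_form_upper_bound by blast
  have "psd (M + s *\<^sub>R N)" if s: "\<bar>s\<bar> < lam / K" for s
    unfolding psd_def
  proof (intro conjI allI)
    show "sym_mat (M + s *\<^sub>R N)"
      using assms by (simp add: pd_def sym_mat_def transpose_def vec_eq_iff)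
    fix v :: "real^'k"
    have "\<bar>s * (v \<bullet> (N *v v))\<bar> \<le> \<bar>s\<bar> * K * (norm v)\<^sup>2"
      using mult_left_mono[OF K(2)[of v] abs_ge_zero[of s]] by (simp add: abs_mult)
    also have "\<dots> \<le> lam * (norm v)\<^sup>2"
      using s K(1) by (intro mult_right_mono) (simp_all add: pos_less_divide_eq less_imp_le)
    finally have "0 \<le> v \<bullet> (M *v v) + s * (v \<bullet> (N *v v))"
      using lam(2)[of v] by (simp add: abs_le_iff)
    then show "0 \<le> v \<bullet> ((M + s *\<^sub>R N) *v v)"
      by (simp add: matrix_vector_mult_add_rdistrib scaleR_matrix_vector_assoc[symmetric]
          inner_add_right)
  qed
  with lam(1) K(1) that show ?thesis by (metis divide_pos_pos)
qed

lemma Agam_add_axis: "Agam A0 A (g + s *\<^sub>R axis i 1) = Agam A0 A g + s *\<^sub>R A i"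
  unfolding Agam_def by (simp add: scaleR_add_left sum.distrib axis_def if_distrib[of "\<lambda>a. s * a"]
      if_distrib[of "\<lambda>a. a *\<^sub>R _"] cong: if_cong)

lemma qgam_add_axis:
  "qgam A0 b0 c0 A b c (g + s *\<^sub>R axis i 1) x = qgam A0 b0 c0 A b c g x + s * qf (A i) (b i) (c i) x"
  unfolding qgam_def by (simp add: distrib_right sum.distrib axis_def if_distrib[of "\<lambda>a. s * a"]
      if_distrib[of "\<lambda>a. a * _"] cong: if_cong)

text \<open>Near a maximizer \<open>g\<close> with \<open>A(g)\<close> positive definite, \<open>\<Gamma>\<close> contains every small move of
  coordinate \<open>i\<close> respecting its sign constraint; maximality then fixes the sign of \<open>q\<^sub>i(x)\<close>.\<close>

lemma definite_maximizer_coordinate_sign: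
  assumes symA: "sym_mat (A i)"
    and gF: "g \<in> Fface A0 b0 c0 Ineq A b c x" and pdg: "pd (Agam A0 A g)"
  obtains e where "0 < e"
    and "\<And>s. \<bar>s\<bar> < e \<Longrightarrow> (i \<in> Ineq \<longrightarrow> 0 \<le> g$i + s) \<Longrightarrow> s * qf (A i) (b i) (c i) x \<le> 0"
proof -
  obtain e where e: "0 < e" "\<And>s. \<bar>s\<bar> < e \<Longrightarrow> psd (Agam A0 A g + s *\<^sub>R A i)"
    using pd_imp_psd_perturbation[OF pdg symA] by blast
  have "s * qf (A i) (b i) (c i) x \<le> 0"
    if "\<bar>s\<bar> < e" "i \<in> Ineq \<longrightarrow> 0 \<le> g$i + s" for s
  proof -
    have "psd (Agam A0 A (g + s *\<^sub>R axis i 1))"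
      using e(2)[OF that(1)] by (simp only: Agam_add_axis)
    then have "g + s *\<^sub>R axis i 1 \<in> Gamma A0 Ineq A"
      using gF that(2) by (auto simp: Fface_def Gamma_def axis_def)
    with gF show ?thesis by (auto simp: Fface_def qgam_add_axis)
  qed
  with e(1) that show ?thesis by blast
qed

lemma definite_maximizer_slackness:
  assumes symA: "\<And>i. sym_mat (A i)"
    and gF: "g \<in> Fface A0 b0 c0 Ineq A b c x" and pdg: "pd (Agam A0 A g)"
  shows "feasQ Ineq A b c x" and "(\<Sum>i\<in>UNIV. g$i * qf (A i) (b i) (c i) x) = 0"
proof -
  have gnn: "0 \<le> g$i" if "i \<in> Ineq" for i
    using gF that by (simp add: Fface_def Gamma_def)
  have nonpos: "qf (A i) (b i) (c i) x \<le> 0"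
    and zero: "i \<notin> Ineq \<or> 0 < g$i \<Longrightarrow> qf (A i) (b i) (c i) x = 0" for i
  proof -
    obtain e where e: "0 < e"
      "\<And>s. \<bar>s\<bar> < e \<Longrightarrow> (i \<in> Ineq \<longrightarrow> 0 \<le> g$i + s) \<Longrightarrow> s * qf (A i) (b i) (c i) x \<le> 0"
      using definite_maximizer_coordinate_sign[OF symA gF pdg] by blast
    have "e / 2 * qf (A i) (b i) (c i) x \<le> 0"
      using e gnn[of i] by (intro e(2)) auto
    with e(1) show "qf (A i) (b i) (c i) x \<le> 0" by (simp add: mult_le_0_iff)
    assume slack: "i \<notin> Ineq \<or> 0 < g$i"
    define m where "m = min (e / 2) (if i \<in> Ineq then g$i else e)"
    have "0 < m" using e(1) slack by (auto simp: m_def)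
    moreover have "- m * qf (A i) (b i) (c i) x \<le> 0"
      using e(1) slack by (intro e(2)) (auto simp: m_def)
    ultimately show "qf (A i) (b i) (c i) x = 0"
      using \<open>qf (A i) (b i) (c i) x \<le> 0\<close> by (simp add: zero_le_mult_iff)
  qed
  show "feasQ Ineq A b c x" using nonpos zero by (simp add: feasQ_def)
  show "(\<Sum>i\<in>UNIV. g$i * qf (A i) (b i) (c i) x) = 0"
  proof (intro sum.neutral ballI)
    fix i
    show "g$i * qf (A i) (b i) (c i) x = 0"
      using zero[of i] gnn[of i] by (cases "i \<notin> Ineq \<or> 0 < g$i") auto
  qed
qed

lemma definite_face_imp_Dset:
  assumes "\<And>i. sym_mat (A i)" and xt: "(x, t) \<in> DSDP A0 b0 c0 Ineq A b c"
    and gF: "g \<in> Fface A0 b0 c0 Ineq A b c x" and "pd (Agam A0 A g)"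
  shows "(x, t) \<in> Dset A0 b0 c0 Ineq A b c"
proof -
  have "qf A0 b0 c0 x = qgam A0 b0 c0 A b c g x"
    using definite_maximizer_slackness(2)[OF assms(1) gF assms(4)] by (simp add: qgam_def)
  also have "\<dots> \<le> 2 * t" using qgam_le_of_DSDP[OF xt] gF by (simp add: Fface_def)
  finally show ?thesis
    using definite_maximizer_slackness(1)[OF assms(1) gF assms(4)] by (simp add: Dset_def)
qed


lemma subset_convex_hull_by_aff_dim_ascent:
  fixes F :: "'a::real_vector \<Rightarrow> 'b::euclidean_space set"
  assumes step: "\<And>p. p \<in> S \<Longrightarrow>
      p \<in> convex hull T \<or> p \<in> convex hull {q \<in> S. aff_dim (F p) < aff_dim (F q)}"
  shows "S \<subseteq> convex hull T"
proof
  fix p show "p \<in> S \<Longrightarrow> p \<in> convex hull T"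
  proof (induction p rule: measure_induct_rule[where f = "\<lambda>p. nat (int DIM('b) - aff_dim (F p))"])
    case (less p)
    have "q \<in> convex hull T" if "q \<in> S" "aff_dim (F p) < aff_dim (F q)" for q
      using aff_dim_le_DIM[of "F q"] that by (intro less.IH) auto
    then have "{q \<in> S. aff_dim (F p) < aff_dim (F q)} \<subseteq> convex hull T" by blast
    then show ?case
      using step[OF less.prems] convex_hull_subset by blast
  qed
qed

lemma DSDP_subset_convex_hull_Dset:
  assumes symA: "\<And>i. sym_mat (A i)"
    and B_att: "\<And>x. bdd_above ((\<lambda>g. qgam A0 b0 c0 A b c g x) ` Gamma A0 Ineq A) \<Longrightarrow>
        (\<exists>g\<in>Gamma A0 Ineq A. \<forall>g'\<in>Gamma A0 Ineq A.
            qgam A0 b0 c0 A b c g' x \<le> qgam A0 b0 c0 A b c g x)"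
    and decomp: "\<And>x t. (x, t) \<in> DSDP A0 b0 c0 Ineq A b c \<Longrightarrow>
        semidefinite_face A0 A (Fface A0 b0 c0 Ineq A b c x) \<Longrightarrow>
        (\<exists>S u. finite S \<and> S \<subseteq> DSDP A0 b0 c0 Ineq A b c
           \<and> (\<forall>p\<in>S. 0 \<le> u p) \<and> sum u S = 1 \<and> (\<Sum>p\<in>S. u p *\<^sub>R p) = (x, t)
           \<and> (\<forall>p\<in>S. aff_dim (Fface A0 b0 c0 Ineq A b c (fst p))
                       > aff_dim (Fface A0 b0 c0 Ineq A b c x)))"
  shows "DSDP A0 b0 c0 Ineq A b c \<subseteq> convex hull (Dset A0 b0 c0 Ineq A b c)"
proof (rule subset_convex_hull_by_aff_dim_ascent[where F = "\<lambda>p. Fface A0 b0 c0 Ineq A b c (fst p)"])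
  fix p assume p: "p \<in> DSDP A0 b0 c0 Ineq A b c"
  obtain x t where xt: "p = (x, t)" by fastforce
  have "bdd_above ((\<lambda>g. qgam A0 b0 c0 A b c g x) ` Gamma A0 Ineq A)"
    using qgam_le_of_DSDP p xt by (intro bdd_aboveI2) auto
  then have nonempty: "Fface A0 b0 c0 Ineq A b c x \<noteq> {}"
    using B_att by (auto simp: Fface_def)
  show "p \<in> convex hull Dset A0 b0 c0 Ineq A b c \<or>
      p \<in> convex hull {q \<in> DSDP A0 b0 c0 Ineq A b c.
          aff_dim (Fface A0 b0 c0 Ineq A b c (fst p)) < aff_dim (Fface A0 b0 c0 Ineq A b c (fst q))}"
  proof (cases "semidefinite_face A0 A (Fface A0 b0 c0 Ineq A b c x)")
    case True
    then obtain S u where S: "finite S" "\<forall>p\<in>S. 0 \<le> u p" "sum u S = 1"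
      "(\<Sum>p\<in>S. u p *\<^sub>R p) = (x, t)" and "S \<subseteq> DSDP A0 b0 c0 Ineq A b c"
      "\<forall>q\<in>S. aff_dim (Fface A0 b0 c0 Ineq A b c x) < aff_dim (Fface A0 b0 c0 Ineq A b c (fst q))"
      using decomp[OF p[unfolded xt]] by blast
    then have "S \<subseteq> {q \<in> DSDP A0 b0 c0 Ineq A b c.
        aff_dim (Fface A0 b0 c0 Ineq A b c x) < aff_dim (Fface A0 b0 c0 Ineq A b c (fst q))}"
      by blast
    with S have "(x, t) \<in> convex hull {q \<in> DSDP A0 b0 c0 Ineq A b c.
        aff_dim (Fface A0 b0 c0 Ineq A b c x) < aff_dim (Fface A0 b0 c0 Ineq A b c (fst q))}"
      unfolding convex_hull_explicit by (intro CollectI exI[of _ S] exI[of _ u] conjI)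
    then show ?thesis unfolding xt by simp
  next
    case False
    then obtain g where "g \<in> Fface A0 b0 c0 Ineq A b c x" "pd (Agam A0 A g)"
      using nonempty by (auto simp: semidefinite_face_def)
    then have "(x, t) \<in> Dset A0 b0 c0 Ineq A b c"
      by (rule definite_face_imp_Dset[OF symA p[unfolded xt]])
    then show ?thesis unfolding xt by (intro disjI1 hull_inc)
  qed
qed

lemma OptSDP_le_Opt: "OptSDP A0 b0 c0 Ineq A b c \<le> Opt A0 b0 c0 Ineq A b c"
  unfolding Opt_def OptSDP_def
proof (rule INF_greatest)
  fix x assume "x \<in> {x. feasQ Ineq A b c x}"
  then have "(x, outer x) \<in> {(x, X). feasSDP Ineq A b c x X}"
    by (simp add: feasQ_imp_feasSDP_outer)
  from INF_lower[OF this, of "\<lambda>xX. ereal (frob (Qmat A0 b0 c0) (Ymat (fst xX) (snd xX)))"]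
  show "(INF xX\<in>{(x, X). feasSDP Ineq A b c x X}. ereal (frob (Qmat A0 b0 c0) (Ymat (fst xX) (snd xX))))
      \<le> ereal (qf A0 b0 c0 x)"
    by (simp add: frob_Qmat_Ymat_outer)
qed

text \<open>The projection of an epigraph onto the value axis is an up-ray, hence convex.\<close>

lemma convex_hull_epigraph_witness:
  assumes "(x, t) \<in> convex hull {(y::'a::real_vector, s::real). P y \<and> f y \<le> s}"
  shows "\<exists>y. P y \<and> f y \<le> t"
proof -
  have "convex {(z::'a, s). \<exists>y. P y \<and> f y \<le> s}"
    unfolding convex_def
  proof (clarsimp)
    fix s1 s2 y1 y2 and u v :: real
    assume "P y1" "f y1 \<le> s1" "P y2" "f y2 \<le> s2" "0 \<le> u" "0 \<le> v" "u + v = 1"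
    then have "u * min (f y1) (f y2) + v * min (f y1) (f y2) \<le> u * s1 + v * s2"
      by (intro add_mono mult_left_mono) auto
    then have "min (f y1) (f y2) \<le> u * s1 + v * s2"
      using \<open>u + v = 1\<close> by (simp add: distrib_right[symmetric])
    with \<open>P y1\<close> \<open>P y2\<close> show "\<exists>y. P y \<and> f y \<le> u * s1 + v * s2"
      by (metis min_def)
  qed
  then have "convex hull {(y, s). P y \<and> f y \<le> s} \<subseteq> {(z, s). \<exists>y. P y \<and> f y \<le> s}"
    by (intro hull_minimal) auto
  with assms show ?thesis by blast
qed

lemma Opt_le_OptSDP:
  assumes hull: "DSDP A0 b0 c0 Ineq A b c \<subseteq> convex hull (Dset A0 b0 c0 Ineq A b c)"
  shows "Opt A0 b0 c0 Ineq A b c \<le> OptSDP A0 b0 c0 Ineq A b c"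
  unfolding OptSDP_def
proof (rule INF_greatest)
  fix xX assume "xX \<in> {(x, X). feasSDP Ineq A b c x X}"
  then obtain x X where xX: "xX = (x, X)" "feasSDP Ineq A b c x X" by blast
  define v where "v = frob (Qmat A0 b0 c0) (Ymat x X)"
  have "Dset A0 b0 c0 Ineq A b c = {(y, s). feasQ Ineq A b c y \<and> qf A0 b0 c0 y / 2 \<le> s}"
    by (auto simp: Dset_def)
  moreover have "(x, v / 2) \<in> DSDP A0 b0 c0 Ineq A b c"
    unfolding DSDP_def v_def using xX(2) by (simp add: exI[of _ X])
  ultimately have "(x, v / 2) \<in> convex hull {(y, s). feasQ Ineq A b c y \<and> qf A0 b0 c0 y / 2 \<le> s}"
    using hull by auto
  then obtain y where y: "feasQ Ineq A b c y" "qf A0 b0 c0 y / 2 \<le> v / 2"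
    using convex_hull_epigraph_witness[of x "v / 2" "feasQ Ineq A b c" "\<lambda>y. qf A0 b0 c0 y / 2"]
    by blast
  then have "Opt A0 b0 c0 Ineq A b c \<le> ereal (qf A0 b0 c0 y)"
    unfolding Opt_def by (intro INF_lower) simp
  also have "\<dots> \<le> ereal v" using y(2) by simp
  finally show "Opt A0 b0 c0 Ineq A b c \<le> ereal (frob (Qmat A0 b0 c0) (Ymat (fst xX) (snd xX)))"
    by (simp add: xX(1) v_def)
qed

theorem mainTheorem4:
  fixes A0 :: "real^'n::finite^'n" and b0 :: "real^'n" and c0 :: real
    and A :: "'m::finite \<Rightarrow> real^'n^'n" and b :: "'m \<Rightarrow> real^'n" and c :: "'m \<Rightarrow> real"
    and Ineq :: "'m set"
  assumes symA0: "sym_mat A0"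
    and symA: "\<And>i. sym_mat (A i)"
    and A_feas: "\<exists>x. feasQ Ineq A b c x"
    and A_pd: "\<exists>g::real^'m. (\<forall>i\<in>Ineq. 0 \<le> g$i) \<and> pd (Agam A0 A g)"
    and B_att: "\<And>x. bdd_above ((\<lambda>g. qgam A0 b0 c0 A b c g x) ` Gamma A0 Ineq A) \<Longrightarrow>
        (\<exists>g\<in>Gamma A0 Ineq A. \<forall>g'\<in>Gamma A0 Ineq A.
            qgam A0 b0 c0 A b c g' x \<le> qgam A0 b0 c0 A b c g x)"
    and decomp: "\<And>x t. (x, t) \<in> DSDP A0 b0 c0 Ineq A b c \<Longrightarrow>
        semidefinite_face A0 A (Fface A0 b0 c0 Ineq A b c x) \<Longrightarrow>
        (\<exists>S u. finite S \<and> S \<subseteq> DSDP A0 b0 c0 Ineq A b c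
           \<and> (\<forall>p\<in>S. 0 \<le> u p) \<and> sum u S = 1 \<and> (\<Sum>p\<in>S. u p *\<^sub>R p) = (x, t)
           \<and> (\<forall>p\<in>S. aff_dim (Fface A0 b0 c0 Ineq A b c (fst p))
                       > aff_dim (Fface A0 b0 c0 Ineq A b c x)))"
  shows "convex hull (Dset A0 b0 c0 Ineq A b c) = DSDP A0 b0 c0 Ineq A b c
    \<and> Opt A0 b0 c0 Ineq A b c = OptSDP A0 b0 c0 Ineq A b c"
proof -
  have hull: "convex hull Dset A0 b0 c0 Ineq A b c = DSDP A0 b0 c0 Ineq A b c"
  proof (rule subset_antisym)
    show "convex hull Dset A0 b0 c0 Ineq A b c \<subseteq> DSDP A0 b0 c0 Ineq A b c"
      using Dset_subset_DSDP convex_DSDP by (rule hull_minimal)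
    show "DSDP A0 b0 c0 Ineq A b c \<subseteq> convex hull Dset A0 b0 c0 Ineq A b c"
      by (rule DSDP_subset_convex_hull_Dset[OF symA B_att decomp])
  qed
  moreover have "Opt A0 b0 c0 Ineq A b c = OptSDP A0 b0 c0 Ineq A b c"
    using hull by (intro antisym Opt_le_OptSDP OptSDP_le_Opt) simp
  ultimately show ?thesis ..
qed

end
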